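(* Fix $y_0\in[-1,1]$ and let $\mathfrak h_N(t)=N^{-(1+\alpha)}\mathfrak h(t,[Ny_0])$. For any initial configurations $\eta$, $$\lim_{L\to\infty}\lim_{N\to\infty}\frac{1}{N^{1+\alpha}}\log P_\eta\Big(\sup_{0\le t\le T}|\mathfrak h_N(t)|\ge L\Big)=-\infty.$$
   Context: Fix $\alpha>0$, $T>0$, $a\in(0,1/2)$ and $C^1$ functions $\rho_\pm:[0,T]\to[a,1-a]$. For $N\ge1$, $\Lambda_N=\{-N,\dots,N\}$, configurations $\eta\in\{0,1\}^{\Lambda_N}$. The process $(\eta_t)$ is the time-inhomogeneous Markov process with generator $L_{N,t}=N^{2+\alpha}(L_{\rm exc}+L_{b,t})$, $L_{\rm exc}f(\eta)=\sum_{x=-N}^{N-1}[f(\eta^{(x,x+1)})-f(\eta)]$, $L_{b,t}f(\eta)=\sum_{\sigma=\pm}\rho_\sigma(t)^{1-\eta(\sigma N)}(1-\rho_\sigma(t))^{\eta(\sigma N)}[f(\eta^{\sigma N})-f(\eta)]$ ($\eta^{(x,x+1)}$ exchanges occupations at $x,x+1$, $\eta^z$ flips the occupation at $z$); $P_\eta$ is its law started from $\eta$. For $x=-N-1,\dots,N$, $\mathfrak h(t,x)=\mathfrak h_+(t,x)-\mathfrak h_-(t,x)$, where $\mathfrak h_+(t,x)$ counts jumps from $x$ to $x+1$ during $[0,t]$ and $\mathfrak h_-(t,x)$ jumps from $x+1$ to $x$ (at $x=-N-1$ these are creations/annihilations at site $-N$, at $x=N$ annihilations/creations at site $N$). *)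

theory Defs
  imports "HOL-Probability.Probability"
begin

type_synonym config = "int \<Rightarrow> bool"
type_synonym mark = "real \<times> nat \<times> real"

text \<open>Uniformised (graphical) construction of the process with generator
  N^(2+alpha) (L_exc + L_b,t).  Events occur at the jumps of a Poisson process of
  total rate R_N = N^(2+alpha) (2N+2).  Each event carries a mark m, uniform in
  {0..2N+1}: m < 2N is the exchange clock of the bond (x,x+1), x = -N+m;
  m = 2N is the boundary clock at -N, m = 2N+1 the boundary clock at N.  A
  boundary clock is accepted (thinning) iff u < (flip rate at current time),
  u uniform on [0,1].\<close>

definition total_rate :: "real \<Rightarrow> nat \<Rightarrow> real" where
  "total_rate \<alpha> N = real N powr (2 + \<alpha>) * (2 * real N + 2)"

definition step_meas :: "real \<Rightarrow> nat \<Rightarrow> mark measure" where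
  "step_meas \<alpha> N =
     density lborel (\<lambda>x. ennreal (exponential_density (total_rate \<alpha> N) x))
     \<Otimes>\<^sub>M (measure_pmf (pmf_of_set {0..<2*N+2})
     \<Otimes>\<^sub>M uniform_measure lborel {0..1::real})"

definition flip_rate :: "real \<Rightarrow> bool \<Rightarrow> real" where
  "flip_rate r b = (if b then 1 - r else r)"

definition swap_cfg :: "config \<Rightarrow> int \<Rightarrow> config" where
  "swap_cfg \<eta> x = \<eta>(x := \<eta> (x+1), x+1 := \<eta> x)"

text \<open>one event at time t with mark (m,u), updating configuration and
  the currents h(x), x = -N-1..N\<close>
definition upd :: "(real \<Rightarrow> real) \<Rightarrow> (real \<Rightarrow> real) \<Rightarrow> nat \<Rightarrow> real \<Rightarrow> nat \<Rightarrow> real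
     \<Rightarrow> config \<times> (int \<Rightarrow> int) \<Rightarrow> config \<times> (int \<Rightarrow> int)" where
  "upd \<rho>m \<rho>p N t m u s =
    (case s of (\<eta>, h) \<Rightarrow>
     if m < 2*N then
       (let x = - int N + int m in
        (swap_cfg \<eta> x,
         h(x := h x + (if \<eta> x \<and> \<not> \<eta> (x+1) then 1
                       else if \<not> \<eta> x \<and> \<eta> (x+1) then -1 else 0))))
     else if m = 2*N then
       (let z = - int N in
        if u < flip_rate (\<rho>m t) (\<eta> z)
        then (\<eta>(z := \<not> \<eta> z), h(z - 1 := h (z - 1) + (if \<eta> z then -1 else 1)))
        else (\<eta>, h))
     else
       (let z = int N in
        if u < flip_rate (\<rho>p t) (\<eta> z)
        then (\<eta>(z := \<not> \<eta> z), h(z := h z + (if \<eta> z then 1 else -1)))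
        else (\<eta>, h)))"

primrec evolve :: "(real \<Rightarrow> real) \<Rightarrow> (real \<Rightarrow> real) \<Rightarrow> nat \<Rightarrow> config \<Rightarrow> mark stream
     \<Rightarrow> nat \<Rightarrow> real \<times> config \<times> (int \<Rightarrow> int)" where
  "evolve \<rho>m \<rho>p N \<eta> \<omega> 0 = (0, \<eta>, \<lambda>_. 0)"
| "evolve \<rho>m \<rho>p N \<eta> \<omega> (Suc k) =
    (case evolve \<rho>m \<rho>p N \<eta> \<omega> k of (t, s) \<Rightarrow>
      (case \<omega> !! k of (\<tau>, m, u) \<Rightarrow>
        (t + \<tau>, upd \<rho>m \<rho>p N (t + \<tau>) m u s)))"

text \<open>the current h(t,x) at time t: value after the last event with time \<le> t\<close>
definition current :: "(real \<Rightarrow> real) \<Rightarrow> (real \<Rightarrow> real) \<Rightarrow> nat \<Rightarrow> config \<Rightarrow> mark stream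
     \<Rightarrow> real \<Rightarrow> int \<Rightarrow> int" where
  "current \<rho>m \<rho>p N \<eta> \<omega> t x =
     snd (snd (evolve \<rho>m \<rho>p N \<eta> \<omega>
       (LEAST k. fst (evolve \<rho>m \<rho>p N \<eta> \<omega> (Suc k)) > t))) x"

definition height_prob :: "real \<Rightarrow> real \<Rightarrow> (real \<Rightarrow> real) \<Rightarrow> (real \<Rightarrow> real) \<Rightarrow> real
     \<Rightarrow> nat \<Rightarrow> config \<Rightarrow> real \<Rightarrow> real" where
  "height_prob \<alpha> T \<rho>m \<rho>p y0 N \<eta> L =
     measure (stream_space (step_meas \<alpha> N))
       {\<omega> \<in> space (stream_space (step_meas \<alpha> N)).
          \<exists>t\<in>{0..T}. \<bar>real_of_int (current \<rho>m \<rho>p N \<eta> \<omega> t \<lfloor>real N * y0\<rfloor>)\<bar>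
                        / real N powr (1 + \<alpha>) \<ge> L}"

definition ln_ereal :: "real \<Rightarrow> ereal" where
  "ln_ereal p = (if p > 0 then ereal (ln p) else -\<infinity>)"

end

theory Submission
  imports Defs
begin

text \<open>Mass balance makes the current 1-Lipschitz in space, so a height
  |h(t,x)| \<ge> L N^(1+\<alpha>) forces the total current S, the sum of h(t,.) over the 2N+2
  bonds, to be of order 2 L N^(2+\<alpha>). Every event changes S by at most 1, and
  since the bulk fluxes telescope, the mean increment of S per event is at most
  1/(2N+2) in absolute value; hence exp(\<theta>(S - B)) + exp(\<theta>(-S - B)) grows in mean
  by at most exp(\<theta>/(2N+2) + \<theta>^2) per event. Events occur at total rate
  R = N^(2+\<alpha>)(2N+2), and the weight exp(R(T - t)), which halves in mean at every
  event, shows that K \<approx> 4RT events occur before T with probability at most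
  exp(-RT).\<close>

section \<open>Inequalities and nonnegative integrals\<close>

lemma exp_le_quadratic:
  fixes y :: real
  assumes "\<bar>y\<bar> \<le> 1"
  shows "exp y \<le> 1 + y + y\<^sup>2"
proof (cases "y \<ge> 0")
  case True
  then show ?thesis using exp_bound[of y] assms by auto
next
  case False
  define z where "z = - y"
  have z: "0 \<le> z" "z \<le> 1" using False assms by (auto simp: z_def)
  have pos: "0 < 1 - z + z\<^sup>2"
    using z by (cases "z < 1") (auto intro: add_pos_nonneg)
  have "1 \<le> (1 + z) * (1 - z + z\<^sup>2)"
    using z by (simp add: algebra_simps power2_eq_square power3_eq_cube)
  also have "\<dots> \<le> exp z * (1 - z + z\<^sup>2)"
    using pos exp_ge_add_one_self[of z] by (intro mult_right_mono) auto
  finally show ?thesis using pos by (simp add: z_def exp_minus field_simps)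
qed

lemma mixture_exp_sum_le:
  fixes \<phi> :: real and q a r :: "'i \<Rightarrow> real"
  assumes "\<bar>\<phi>\<bar> \<le> 1" and "\<And>i. i \<in> I \<Longrightarrow> 0 \<le> q i \<and> q i \<le> 1"
    and "\<And>i. i \<in> I \<Longrightarrow> \<bar>a i\<bar> \<le> 1 \<and> \<bar>r i\<bar> \<le> 1"
    and "\<bar>\<Sum>i\<in>I. q i * a i + (1 - q i) * r i\<bar> \<le> 1"
  shows "(\<Sum>i\<in>I. q i * exp (\<phi> * a i) + (1 - q i) * exp (\<phi> * r i)) \<le> card I * (1 + \<phi>\<^sup>2) + \<bar>\<phi>\<bar>"
proof -
  have exp_le: "exp (\<phi> * d) \<le> 1 + \<phi> * d + \<phi>\<^sup>2" if "\<bar>d\<bar> \<le> 1" for d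
  proof -
    have "\<bar>\<phi> * d\<bar> \<le> 1" using assms(1) that by (simp add: abs_mult mult_le_one)
    moreover have "(\<phi> * d)\<^sup>2 \<le> \<phi>\<^sup>2"
      using that by (simp add: power_mult_distrib mult_left_le abs_square_le_1)
    ultimately show ?thesis using exp_le_quadratic[of "\<phi> * d"] by linarith
  qed
  have "(\<Sum>i\<in>I. q i * exp (\<phi> * a i) + (1 - q i) * exp (\<phi> * r i))
      \<le> (\<Sum>i\<in>I. q i * (1 + \<phi> * a i + \<phi>\<^sup>2) + (1 - q i) * (1 + \<phi> * r i + \<phi>\<^sup>2))"
    using assms(2,3) by (intro sum_mono add_mono mult_left_mono exp_le) auto
  also have "\<dots> = (\<Sum>i\<in>I. (1 + \<phi>\<^sup>2) + \<phi> * (q i * a i + (1 - q i) * r i))"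
    by (intro sum.cong) (auto simp: algebra_simps)
  also have "\<dots> = card I * (1 + \<phi>\<^sup>2) + \<phi> * (\<Sum>i\<in>I. q i * a i + (1 - q i) * r i)"
    by (simp only: sum.distrib sum_distrib_left[symmetric] sum_constant distrib_left mult_1_right)
  also have "\<phi> * (\<Sum>i\<in>I. q i * a i + (1 - q i) * r i) \<le> \<bar>\<phi>\<bar> * \<bar>\<Sum>i\<in>I. q i * a i + (1 - q i) * r i\<bar>"
    by (metis abs_ge_self abs_mult)
  also have "\<dots> \<le> \<bar>\<phi>\<bar>"
    using assms(4) by (simp add: mult_left_le)
  finally show ?thesis by simp
qed

lemma sum_power_le:
  fixes c :: real
  assumes "1 \<le> c"
  shows "(\<Sum>j<K. c ^ j) \<le> real K * c ^ K"
proof -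
  have "(\<Sum>j<K. c ^ j) \<le> (\<Sum>j<K. c ^ K)"
    using assms by (intro sum_mono power_increasing) auto
  then show ?thesis by simp
qed

lemma half_power_mult_exp_le:
  fixes x :: real
  assumes "4 * x \<le> real K"
  shows "(1/2)^K * exp x \<le> exp (- x)"
proof -
  have "exp (2 * x) \<le> exp (real K / 2)" using assms by simp
  also have "\<dots> = exp (1/2) ^ K" by (simp add: exp_of_nat_mult[symmetric])
  also have "\<dots> \<le> 2 ^ K"
    using exp_bound[of "1/2 :: real"] by (intro power_mono) (auto simp: power2_eq_square)
  finally have "exp x * exp x \<le> 2 ^ K" by (simp add: mult_exp_exp)
  then show ?thesis by (simp add: power_one_over field_simps exp_minus)
qed

text \<open>The rates \<rho>m, \<rho>p are not assumed measurable, so neither is the step map;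
  the following bounds need no measurability of the integrand.\<close>

lemma nn_integral_le_via_measurable:
  assumes "\<And>g. g \<in> borel_measurable M \<Longrightarrow> (\<And>x. g x \<le> f x) \<Longrightarrow> integral\<^sup>N M g \<le> C"
  shows "integral\<^sup>N M f \<le> C"
  unfolding nn_integral_def
proof (rule SUP_least)
  fix g assume "g \<in> {g. simple_function M g \<and> g \<le> f}"
  then have g: "simple_function M g" "g \<le> f" by auto
  have "integral\<^sup>S M g = integral\<^sup>N M g" using g(1) by (simp add: nn_integral_eq_simple_integral)
  also have "\<dots> \<le> C" using assms[of g] g borel_measurable_simple_function by (auto simp: le_fun_def)
  finally show "integral\<^sup>S M g \<le> C" .
qed

lemma (in prob_space) nn_integral_stream_space_le:
  "(\<integral>\<^sup>+\<omega>. f \<omega> \<partial>stream_space M) \<le> (\<integral>\<^sup>+x. \<integral>\<^sup>+\<omega>. f (x ## \<omega>) \<partial>stream_space M \<partial>M)"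
proof (rule nn_integral_le_via_measurable)
  fix g assume g: "g \<in> borel_measurable (stream_space M)" "\<And>x. g x \<le> f x"
  have "integral\<^sup>N (stream_space M) g = (\<integral>\<^sup>+x. \<integral>\<^sup>+\<omega>. g (x ## \<omega>) \<partial>stream_space M \<partial>M)"
    using nn_integral_stream_space[OF g(1)] .
  also have "\<dots> \<le> (\<integral>\<^sup>+x. \<integral>\<^sup>+\<omega>. f (x ## \<omega>) \<partial>stream_space M \<partial>M)"
    by (intro nn_integral_mono g(2))
  finally show "integral\<^sup>N (stream_space M) g \<le> \<dots>" .
qed

lemma nn_integral_pair_le:
  assumes "sigma_finite_measure B"
  shows "(\<integral>\<^sup>+z. f z \<partial>(A \<Otimes>\<^sub>M B)) \<le> (\<integral>\<^sup>+a. \<integral>\<^sup>+b. f (a, b) \<partial>B \<partial>A)"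
proof (rule nn_integral_le_via_measurable)
  fix g assume g: "g \<in> borel_measurable (A \<Otimes>\<^sub>M B)" "\<And>x. g x \<le> f x"
  have "integral\<^sup>N (A \<Otimes>\<^sub>M B) g = (\<integral>\<^sup>+a. \<integral>\<^sup>+b. g (a, b) \<partial>B \<partial>A)"
    using sigma_finite_measure.nn_integral_fst[OF assms g(1)] by simp
  also have "\<dots> \<le> (\<integral>\<^sup>+a. \<integral>\<^sup>+b. f (a, b) \<partial>B \<partial>A)"
    by (intro nn_integral_mono g(2))
  finally show "integral\<^sup>N (A \<Otimes>\<^sub>M B) g \<le> \<dots>" .
qed

lemma (in prob_space) nn_integral_add_const_le:
  "(\<integral>\<^sup>+x. c + f x \<partial>M) \<le> c + (\<integral>\<^sup>+x. f x \<partial>M)"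
proof (cases "c = top")
  case False
  show ?thesis
  proof (rule nn_integral_le_via_measurable)
    fix g assume g: "g \<in> borel_measurable M" "\<And>x. g x \<le> c + f x"
    have "integral\<^sup>N M g \<le> (\<integral>\<^sup>+x. c + (g x - c) \<partial>M)"
      by (intro nn_integral_mono) (metis add.commute diff_add_self_ennreal le_cases le_iff_add)
    also have "\<dots> = c + (\<integral>\<^sup>+x. (g x - c) \<partial>M)"
      using g(1) by (subst nn_integral_add) (auto simp: emeasure_space_1)
    also have "\<dots> \<le> c + (\<integral>\<^sup>+x. f x \<partial>M)"
      using g(2) False by (intro add_left_mono nn_integral_mono) (simp add: ennreal_minus_le_iff)
    finally show "integral\<^sup>N M g \<le> c + (\<integral>\<^sup>+x. f x \<partial>M)" .
  qed
qed simp

lemma emeasure_le_nn_integral_dominating: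
  assumes "\<And>x. indicator A x \<le> f x"
  shows "emeasure M A \<le> (\<integral>\<^sup>+x. f x \<partial>M)"
proof (cases "A \<in> sets M")
  case True
  then have "emeasure M A = (\<integral>\<^sup>+x. indicator A x \<partial>M)" by simp
  also have "\<dots> \<le> (\<integral>\<^sup>+x. f x \<partial>M)" by (intro nn_integral_mono assms)
  finally show ?thesis .
qed (simp add: emeasure_notin_sets)

lemma nn_integral_threshold:
  fixes M :: "real measure"
  assumes "prob_space M" "sets M = sets borel"
  shows "(\<integral>\<^sup>+u. (if u < p then a else b) \<partial>M)
    = a * ennreal (measure M {..<p}) + b * ennreal (1 - measure M {..<p})"
proof -
  interpret prob_space M by fact
  have sets: "{..<p} \<in> events" "{p..} \<in> events" using assms(2) by auto
  have "(\<integral>\<^sup>+u. (if u < p then a else b) \<partial>M)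
      = (\<integral>\<^sup>+u. a * indicator {..<p} u + b * indicator {p..} u \<partial>M)"
    by (intro nn_integral_cong) (auto split: split_indicator)
  also have "\<dots> = a * emeasure M {..<p} + b * emeasure M {p..}"
    using sets by (subst nn_integral_add) (auto simp: nn_integral_cmult_indicator)
  also have "{p..} = space M - {..<p}" using sets_eq_imp_space_eq[OF assms(2)] by auto
  finally show ?thesis using sets by (simp add: emeasure_eq_measure prob_compl)
qed

lemma nn_integral_exponential_affine:
  fixes R A B :: real
  assumes "R > 0" "0 \<le> A" "0 \<le> B"
  shows "(\<integral>\<^sup>+\<tau>. ennreal (A + B * exp (- R * \<tau>))
      \<partial>density lborel (\<lambda>x. ennreal (exponential_density R x))) = ennreal (A + B / 2)"
proof -
  let ?D = "\<lambda>R. density lborel (\<lambda>x. ennreal (exponential_density R x))"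
  have total: "(\<integral>\<^sup>+\<tau>. ennreal (exponential_density R \<tau>) \<partial>lborel) = 1" if "R > 0" for R :: real
    using prob_space.emeasure_space_1[OF prob_space_exponential_density[OF that]]
    by (simp add: emeasure_density exponential_density_def)
  have "(\<integral>\<^sup>+\<tau>. ennreal (A + B * exp (- R * \<tau>)) \<partial>?D R)
      = (\<integral>\<^sup>+\<tau>. ennreal A \<partial>?D R) + (\<integral>\<^sup>+\<tau>. ennreal (B * exp (- R * \<tau>)) \<partial>?D R)"
    using assms by (simp add: ennreal_plus nn_integral_add)
  also have "(\<integral>\<^sup>+\<tau>. ennreal A \<partial>?D R) = ennreal A"
    using total[OF assms(1)] by (simp add: emeasure_density exponential_density_def)
  also have "(\<integral>\<^sup>+\<tau>. ennreal (B * exp (- R * \<tau>)) \<partial>?D R)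
      = (\<integral>\<^sup>+\<tau>. ennreal (B / 2) * ennreal (exponential_density (2 * R) \<tau>) \<partial>lborel)"
    using assms by (subst nn_integral_density) (auto simp: exponential_density_def
        ennreal_mult'[symmetric] exp_add[symmetric] intro!: nn_integral_cong arg_cong[where f=ennreal])
  also have "\<dots> = ennreal (B / 2)"
    using total[of "2 * R"] assms by (subst nn_integral_cmult) (auto simp: exponential_density_def)
  finally show ?thesis using assms by (simp add: ennreal_plus)
qed

section \<open>The graphical construction as an iterated map\<close>

type_synonym state = "real \<times> config \<times> (int \<Rightarrow> int)"

context
  fixes \<rho>m \<rho>p :: "real \<Rightarrow> real" and N :: nat
begin

definition step :: "state \<Rightarrow> mark \<Rightarrow> state" where
  "step s x = (case s of (t, c) \<Rightarrow> case x of (\<tau>, m, u) \<Rightarrow> (t + \<tau>, upd \<rho>m \<rho>p N (t + \<tau>) m u c))"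

primrec run :: "state \<Rightarrow> mark stream \<Rightarrow> nat \<Rightarrow> state" where
  "run s \<omega> 0 = s"
| "run s \<omega> (Suc k) = step (run s \<omega> k) (\<omega> !! k)"

lemma run_Suc_shift: "run s \<omega> (Suc k) = run (step s (shd \<omega>)) (stl \<omega>) k"
  by (induction k) auto

lemma evolve_eq_run: "evolve \<rho>m \<rho>p N \<eta> \<omega> k = run (0, \<eta>, \<lambda>_. 0) \<omega> k"
  by (induction k) (simp_all add: step_def split: prod.splits)

lemma fst_step: "fst (step s (\<tau>, m, u)) = fst s + \<tau>"
  by (cases s) (simp add: step_def)

definition mass_balance :: "config \<Rightarrow> config \<times> (int \<Rightarrow> int) \<Rightarrow> bool" where
  "mass_balance \<eta>0 c \<longleftrightarrow> (\<forall>x. - int N \<le> x \<and> x \<le> int N \<longrightarrow>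
      snd c x - snd c (x - 1) = of_bool (\<eta>0 x) - of_bool (fst c x))"

lemma mass_balance_upd:
  assumes "mass_balance \<eta>0 c"
  shows "mass_balance \<eta>0 (upd \<rho>m \<rho>p N t m u c)"
proof -
  obtain \<eta> h where c: "c = (\<eta>, h)" by (cases c)
  have balance: "h y - h (y - 1) = of_bool (\<eta>0 y) - of_bool (\<eta> y)" if "- int N \<le> y" "y \<le> int N" for y
    using assms that unfolding c mass_balance_def by auto
  show ?thesis
  proof (cases "m < 2*N")
    case True
    define x where "x = - int N + int m"
    define d :: int where "d = (if \<eta> x \<and> \<not> \<eta> (x+1) then 1 else if \<not> \<eta> x \<and> \<eta> (x+1) then -1 else 0)"
    have x: "- int N \<le> x" "x < int N" using True by (auto simp: x_def)
    have upd_eq: "upd \<rho>m \<rho>p N t m u c = (swap_cfg \<eta> x, h(x := h x + d))"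
      using True by (simp add: c upd_def Let_def x_def d_def)
    show ?thesis
      unfolding mass_balance_def upd_eq fst_conv snd_conv
    proof (intro allI impI)
      fix y assume "- int N \<le> y \<and> y \<le> int N"
      then show "(h(x := h x + d)) y - (h(x := h x + d)) (y - 1) = of_bool (\<eta>0 y) - of_bool (swap_cfg \<eta> x y)"
        using balance[of x] balance[of "x+1"] balance[of y] x
        by (cases "y = x"; cases "y = x + 1"; auto simp: swap_cfg_def d_def)
    qed
  next
    case False
    then show ?thesis using assms unfolding c upd_def mass_balance_def Let_def
      by (auto split: if_splits)
  qed
qed

lemma mass_balance_run:
  "mass_balance \<eta>0 (snd s) \<Longrightarrow> mass_balance \<eta>0 (snd (run s \<omega> k))"
  by (induction k) (auto simp: step_def mass_balance_upd split: prod.splits)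

lemma mass_balance_current_lipschitz:
  assumes "mass_balance \<eta>0 (\<eta>, h)" "- int N - 1 \<le> a" "a \<le> b" "b \<le> int N"
  shows "\<bar>h b - h a\<bar> \<le> b - a"
  using assms(3,4)
proof (induction b rule: int_ge_induct)
  case base then show ?case by simp
next
  case (step i)
  have "h (i+1) - h i = of_bool (\<eta>0 (i+1)) - of_bool (\<eta> (i+1))"
    using assms(1,2) step unfolding mass_balance_def by (auto dest!: spec[of _ "i+1"])
  then have "\<bar>h (i+1) - h i\<bar> \<le> 1" by simp
  then show ?case using step by linarith
qed

lemma mass_balance_current_spread:
  assumes "mass_balance \<eta>0 (\<eta>, h)"
    and "- int N - 1 \<le> a" "a \<le> int N" "- int N - 1 \<le> b" "b \<le> int N"
  shows "\<bar>h a - h b\<bar> \<le> 2 * int N + 1"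
proof (cases "a \<le> b")
  case True
  then show ?thesis using mass_balance_current_lipschitz[OF assms(1,2) True assms(5)] assms by linarith
next
  case False
  then show ?thesis using mass_balance_current_lipschitz[OF assms(1,4) _ assms(3)] assms by linarith
qed

definition total_current :: "(int \<Rightarrow> int) \<Rightarrow> int" where
  "total_current h = (\<Sum>y\<in>{- int N - 1..int N}. h y)"

lemma total_current_upd:
  assumes "- int N - 1 \<le> x" "x \<le> int N"
  shows "total_current (h(x := v)) = total_current h - h x + v"
proof -
  have "x \<in> {- int N - 1..int N}" using assms by auto
  then show ?thesis unfolding total_current_def by (simp add: sum.remove algebra_simps)
qed

lemma total_current_approximates_current:
  assumes "mass_balance \<eta>0 (\<eta>, h)" "- int N - 1 \<le> x" "x \<le> int N"
  shows "\<bar>(2 * int N + 2) * h x - total_current h\<bar> \<le> (2 * int N + 2) * (2 * int N + 1)"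
proof -
  have "(2 * int N + 2) * h x - total_current h = (\<Sum>y\<in>{- int N - 1..int N}. h x - h y)"
    unfolding total_current_def sum_subtractf by simp
  also have "\<bar>\<dots>\<bar> \<le> (\<Sum>y\<in>{- int N - 1..int N}. \<bar>h x - h y\<bar>)" by (rule sum_abs)
  also have "\<dots> \<le> (\<Sum>y\<in>{- int N - 1..int N}. 2 * int N + 1)"
    by (intro sum_mono mass_balance_current_spread[OF assms]) auto
  also have "\<dots> = (2 * int N + 2) * (2 * int N + 1)" by simp
  finally show ?thesis .
qed

lemma total_current_lower_bound:
  assumes "mass_balance \<eta>0 (\<eta>, h)" "- int N - 1 \<le> x" "x \<le> int N"
  shows "(2 * real N + 2) * (\<bar>real_of_int (h x)\<bar> - (2 * real N + 1)) \<le> \<bar>real_of_int (total_current h)\<bar>"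
proof -
  have "\<bar>(2 * real N + 2) * h x - total_current h\<bar> \<le> (2 * real N + 2) * (2 * real N + 1)"
    using total_current_approximates_current[OF assms]
    unfolding of_int_le_iff[where 'a=real, symmetric] by simp
  moreover have "\<bar>(2 * real N + 2) * h x\<bar> - \<bar>real_of_int (total_current h)\<bar>
      \<le> \<bar>(2 * real N + 2) * h x - total_current h\<bar>"
    by (rule abs_triangle_ineq2)
  ultimately show ?thesis by (simp add: abs_mult algebra_simps)
qed

text \<open>A mark (\<tau>, m, u) leads to one of two states, according to whether u lies
  below the threshold; accepted and rejected evaluate the step at the
  representatives u = threshold - 1 and u = threshold. Exchange clocks have
  threshold 0, but for them both states coincide.\<close>

definition threshold :: "state \<Rightarrow> real \<Rightarrow> nat \<Rightarrow> real" where
  "threshold s \<tau> m = (case s of (t, \<eta>, h) \<Rightarrow>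
     if m < 2*N then 0
     else if m = 2*N then flip_rate (\<rho>m (t + \<tau>)) (\<eta> (- int N))
     else flip_rate (\<rho>p (t + \<tau>)) (\<eta> (int N)))"

definition accepted :: "state \<Rightarrow> real \<Rightarrow> nat \<Rightarrow> state" where
  "accepted s \<tau> m = step s (\<tau>, m, threshold s \<tau> m - 1)"

definition rejected :: "state \<Rightarrow> real \<Rightarrow> nat \<Rightarrow> state" where
  "rejected s \<tau> m = step s (\<tau>, m, threshold s \<tau> m)"

lemma step_eq_accepted_rejected:
  "step s (\<tau>, m, u) = (if u < threshold s \<tau> m then accepted s \<tau> m else rejected s \<tau> m)"
  by (cases s) (auto simp: step_def threshold_def accepted_def rejected_def upd_def Let_def)

definition bond_flux :: "config \<Rightarrow> nat \<Rightarrow> int" where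
  "bond_flux \<eta> m = (let x = - int N + int m in
     if \<eta> x \<and> \<not> \<eta> (x+1) then 1 else if \<not> \<eta> x \<and> \<eta> (x+1) then -1 else 0)"

definition accepted_increment :: "config \<Rightarrow> nat \<Rightarrow> int" where
  "accepted_increment \<eta> m =
     (if m < 2*N then bond_flux \<eta> m
      else if m = 2*N then (if \<eta> (- int N) then -1 else 1)
      else (if \<eta> (int N) then 1 else -1))"

definition rejected_increment :: "config \<Rightarrow> nat \<Rightarrow> int" where
  "rejected_increment \<eta> m = (if m < 2*N then bond_flux \<eta> m else 0)"

lemma total_current_accepted:
  assumes "m < 2*N+2"
  shows "total_current (snd (snd (accepted s \<tau> m)))
       = total_current (snd (snd s)) + accepted_increment (fst (snd s)) m"
  using assms
  by (cases s, cases "m < 2*N"; cases "m = 2*N")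
     (auto simp: accepted_def step_def threshold_def upd_def Let_def accepted_increment_def
       bond_flux_def total_current_upd)

lemma total_current_rejected:
  assumes "m < 2*N+2"
  shows "total_current (snd (snd (rejected s \<tau> m)))
       = total_current (snd (snd s)) + rejected_increment (fst (snd s)) m"
  using assms
  by (cases s, cases "m < 2*N"; cases "m = 2*N")
     (auto simp: rejected_def step_def threshold_def upd_def Let_def rejected_increment_def
       bond_flux_def total_current_upd)

text \<open>The bulk fluxes telescope to \<eta>(-N) - \<eta>(N); adding the boundary clocks, the
  mean increment is a difference of two numbers in [0,1], whatever the acceptance
  probabilities.\<close>

lemma mean_increment_bounded:
  fixes q :: "nat \<Rightarrow> real"
  assumes "\<And>m. 0 \<le> q m \<and> q m \<le> 1"
  shows "\<bar>\<Sum>m<2*N+2. q m * accepted_increment \<eta> m + (1 - q m) * rejected_increment \<eta> m\<bar> \<le> 1"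
proof -
  define occ :: "nat \<Rightarrow> real" where "occ m = of_bool (\<eta> (- int N + int m))" for m
  have "(\<Sum>m<2*N. q m * accepted_increment \<eta> m + (1 - q m) * rejected_increment \<eta> m)
      = (\<Sum>m<2*N. occ m - occ (Suc m))"
    by (intro sum.cong) (auto simp: accepted_increment_def rejected_increment_def bond_flux_def
        occ_def Let_def add_ac algebra_simps)
  also have "\<dots> = occ 0 - occ (2*N)" by (rule sum_lessThan_telescope')
  finally have bulk: "(\<Sum>m<2*N. q m * accepted_increment \<eta> m + (1 - q m) * rejected_increment \<eta> m)
      = of_bool (\<eta> (- int N)) - of_bool (\<eta> (int N))"
    by (simp add: occ_def)
  have "(\<Sum>m<2*N+2. q m * accepted_increment \<eta> m + (1 - q m) * rejected_increment \<eta> m)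
      = (\<Sum>m<2*N. q m * accepted_increment \<eta> m + (1 - q m) * rejected_increment \<eta> m)
        + q (2*N) * (if \<eta> (- int N) then -1 else 1) + q (2*N+1) * (if \<eta> (int N) then 1 else -1)"
    by (simp add: numeral_2_eq_2 accepted_increment_def rejected_increment_def)
  then show ?thesis
    using assms[of "2*N"] assms[of "2*N+1"] unfolding bulk by auto
qed

end

section \<open>Exponential moments of the total current\<close>

definition twosided_exp :: "real \<Rightarrow> real \<Rightarrow> real \<Rightarrow> real" where
  "twosided_exp \<theta> B x = exp (\<theta> * (x - B)) + exp (\<theta> * (- x - B))"

lemma twosided_exp_nonneg: "0 \<le> twosided_exp \<theta> B x"
  by (simp add: twosided_exp_def add_nonneg_nonneg)

lemma one_le_twosided_exp:
  assumes "0 \<le> \<theta>" "B \<le> \<bar>x\<bar>"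
  shows "1 \<le> twosided_exp \<theta> B x"
proof -
  have "1 \<le> exp (\<theta> * (x - B)) \<or> 1 \<le> exp (\<theta> * (- x - B))"
    using assms by (cases "0 \<le> x") (auto simp: mult_nonneg_nonneg)
  then show ?thesis
    unfolding twosided_exp_def using exp_gt_zero[of "\<theta> * (x - B)"] exp_gt_zero[of "\<theta> * (- x - B)"]
    by linarith
qed

definition time_weight :: "real \<Rightarrow> real \<Rightarrow> state \<Rightarrow> real" where
  "time_weight R T s = exp (R * (T - fst s))"

lemma time_weight_nonneg: "0 \<le> time_weight R T s"
  by (simp add: time_weight_def)

context
  fixes \<rho>m \<rho>p :: "real \<Rightarrow> real" and N :: nat
begin

definition growth_factor :: "real \<Rightarrow> real" where
  "growth_factor \<theta> = exp (\<theta> / (2 * real N + 2) + \<theta>\<^sup>2)"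

lemma mixture_exp_sum_le_growth_factor:
  fixes q a r :: "nat \<Rightarrow> real"
  assumes "0 \<le> \<theta>" "\<theta> \<le> 1" "\<And>m. 0 \<le> q m \<and> q m \<le> 1" "\<And>m. \<bar>a m\<bar> \<le> 1 \<and> \<bar>r m\<bar> \<le> 1"
    and "\<bar>\<Sum>m<2*N+2. q m * a m + (1 - q m) * r m\<bar> \<le> 1"
  shows "(\<Sum>m<2*N+2. q m * exp (\<theta> * a m) + (1 - q m) * exp (\<theta> * r m)) \<le> (2 * real N + 2) * growth_factor \<theta>"
proof -
  have "(\<Sum>m<2*N+2. q m * exp (\<theta> * a m) + (1 - q m) * exp (\<theta> * r m)) \<le> (2 * real N + 2) * (1 + \<theta>\<^sup>2) + \<theta>"
    using mixture_exp_sum_le[of \<theta> "{..<2*N+2}" q a r] assms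
    by (simp add: add.commute del: sum.lessThan_Suc)
  also have "\<dots> = (2 * real N + 2) * (1 + (\<theta> / (2 * real N + 2) + \<theta>\<^sup>2))"
    by (simp add: field_simps)
  also have "\<dots> \<le> (2 * real N + 2) * growth_factor \<theta>"
    unfolding growth_factor_def by (intro mult_left_mono exp_ge_add_one_self) simp
  finally show ?thesis .
qed

definition current_weight :: "real \<Rightarrow> real \<Rightarrow> state \<Rightarrow> real" where
  "current_weight \<theta> B s = twosided_exp \<theta> B (total_current N (snd (snd s)))"

lemma current_weight_nonneg: "0 \<le> current_weight \<theta> B s"
  by (simp add: current_weight_def twosided_exp_nonneg)

definition acceptance_prob :: "state \<Rightarrow> real \<Rightarrow> nat \<Rightarrow> real" where
  "acceptance_prob s \<tau> m = measure (uniform_measure lborel {0..1}) {..< threshold \<rho>m \<rho>p N s \<tau> m}"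

text \<open>The mean of F after one step with waiting time \<tau>: the clock is uniform and
  the acceptance variable u has been integrated out.\<close>

definition step_mean :: "(state \<Rightarrow> real) \<Rightarrow> state \<Rightarrow> real \<Rightarrow> real" where
  "step_mean F s \<tau> =
     (\<Sum>m<2*N+2. F (accepted \<rho>m \<rho>p N s \<tau> m) * acceptance_prob s \<tau> m
        + F (rejected \<rho>m \<rho>p N s \<tau> m) * (1 - acceptance_prob s \<tau> m)) / (2 * real N + 2)"

lemma acceptance_prob_bounds: "0 \<le> acceptance_prob s \<tau> m" "acceptance_prob s \<tau> m \<le> 1"
proof -
  interpret prob_space "uniform_measure lborel {0..1::real}"
    by (rule prob_space_uniform_measure) auto
  show "0 \<le> acceptance_prob s \<tau> m" "acceptance_prob s \<tau> m \<le> 1"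
    unfolding acceptance_prob_def by (rule measure_nonneg, rule prob_le_1)
qed

lemma nn_integral_step_acceptance:
  assumes "\<And>s. 0 \<le> F s"
  shows "(\<integral>\<^sup>+u. ennreal (F (step \<rho>m \<rho>p N s (\<tau>, m, u))) \<partial>uniform_measure lborel {0..1})
    = ennreal (F (accepted \<rho>m \<rho>p N s \<tau> m) * acceptance_prob s \<tau> m
        + F (rejected \<rho>m \<rho>p N s \<tau> m) * (1 - acceptance_prob s \<tau> m))"
proof -
  have "prob_space (uniform_measure lborel {0..1::real})"
    by (rule prob_space_uniform_measure) auto
  then show ?thesis
    using assms acceptance_prob_bounds[of s \<tau> m]
    by (simp add: step_eq_accepted_rejected if_distrib[of "\<lambda>s. ennreal (F s)"]
        nn_integral_threshold acceptance_prob_def ennreal_mult[symmetric] ennreal_plus)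
qed

lemma step_mean_linear:
  "step_mean (\<lambda>s. a * F s + b * G s) s \<tau> = a * step_mean F s \<tau> + b * step_mean G s \<tau>"
proof -
  let ?mix = "\<lambda>F m. F (accepted \<rho>m \<rho>p N s \<tau> m) * acceptance_prob s \<tau> m
      + F (rejected \<rho>m \<rho>p N s \<tau> m) * (1 - acceptance_prob s \<tau> m)"
  have sum_eq: "(\<Sum>m<2*N+2. ?mix (\<lambda>s. a * F s + b * G s) m)
      = a * (\<Sum>m<2*N+2. ?mix F m) + b * (\<Sum>m<2*N+2. ?mix G m)"
    unfolding sum_distrib_left sum.distrib[symmetric] by (intro sum.cong refl) (simp add: algebra_simps)
  show ?thesis
    unfolding step_mean_def sum_eq by (simp only: add_divide_distrib times_divide_eq_right)
qed

lemma step_mean_time_weight: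
  "step_mean (time_weight R T) s \<tau> = exp (- R * \<tau>) * time_weight R T s"
proof -
  have "time_weight R T (step \<rho>m \<rho>p N s (\<tau>, m, u)) = exp (- R * \<tau>) * time_weight R T s" for m u
    by (simp add: time_weight_def fst_step mult_exp_exp algebra_simps)
  then show ?thesis
    by (simp add: step_mean_def accepted_def rejected_def field_simps del: sum.lessThan_Suc)
qed

lemma step_mean_current_weight_le:
  assumes "0 \<le> \<theta>" "\<theta> \<le> 1"
  shows "step_mean (current_weight \<theta> B) s \<tau> \<le> growth_factor \<theta> * current_weight \<theta> B s"
proof -
  obtain t \<eta> h where s: "s = (t, \<eta>, h)" by (cases s)
  define q where "q m = acceptance_prob s \<tau> m" for m
  define a where "a m = real_of_int (accepted_increment N \<eta> m)" for m
  define r where "r m = real_of_int (rejected_increment N \<eta> m)" for m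
  define S where "S = real_of_int (total_current N h)"
  have q: "0 \<le> q m \<and> q m \<le> 1" for m by (simp add: q_def acceptance_prob_bounds)
  have ar: "\<bar>a m\<bar> \<le> 1 \<and> \<bar>r m\<bar> \<le> 1" for m
    by (simp add: a_def r_def accepted_increment_def rejected_increment_def bond_flux_def Let_def)
  have drift: "\<bar>\<Sum>m<2*N+2. q m * a m + (1 - q m) * r m\<bar> \<le> 1"
    using mean_increment_bounded[of q N \<eta>] q unfolding a_def r_def by auto
  have drift_neg: "\<bar>\<Sum>m<2*N+2. q m * - a m + (1 - q m) * - r m\<bar> \<le> 1"
  proof -
    have "(\<Sum>m<2*N+2. q m * - a m + (1 - q m) * - r m) = - (\<Sum>m<2*N+2. q m * a m + (1 - q m) * r m)"
      by (simp add: sum_negf[symmetric])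
    then show ?thesis using drift by simp
  qed
  have "(\<Sum>m<2*N+2. current_weight \<theta> B (accepted \<rho>m \<rho>p N s \<tau> m) * q m
        + current_weight \<theta> B (rejected \<rho>m \<rho>p N s \<tau> m) * (1 - q m))
     = exp (\<theta> * (S - B)) * (\<Sum>m<2*N+2. q m * exp (\<theta> * a m) + (1 - q m) * exp (\<theta> * r m))
       + exp (\<theta> * (- S - B)) * (\<Sum>m<2*N+2. q m * exp (\<theta> * - a m) + (1 - q m) * exp (\<theta> * - r m))"
    unfolding sum_distrib_left sum.distrib[symmetric]
    by (intro sum.cong refl) (simp add: current_weight_def twosided_exp_def total_current_accepted
        total_current_rejected s S_def a_def r_def mult_exp_exp algebra_simps)
  also have "\<dots> \<le> exp (\<theta> * (S - B)) * ((2 * real N + 2) * growth_factor \<theta>)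
       + exp (\<theta> * (- S - B)) * ((2 * real N + 2) * growth_factor \<theta>)"
    using assms q drift drift_neg ar by (intro add_mono mult_left_mono mixture_exp_sum_le_growth_factor) auto
  also have "\<dots> = (2 * real N + 2) * (growth_factor \<theta> * current_weight \<theta> B s)"
    by (simp add: current_weight_def twosided_exp_def s S_def algebra_simps)
  finally show ?thesis
    unfolding step_mean_def q_def by (simp add: pos_divide_le_eq mult.commute)
qed

end

lemma prob_space_step_meas: "0 < total_rate \<alpha> N \<Longrightarrow> prob_space (step_meas \<alpha> N)"
  unfolding step_meas_def
  by (intro prob_space_pair prob_space_exponential_density prob_space_measure_pmf
      prob_space_uniform_measure) auto

lemma nn_integral_step_le:
  fixes F :: "state \<Rightarrow> real"
  assumes R: "total_rate \<alpha> N > 0" and F: "\<And>s. 0 \<le> F s"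
  shows "(\<integral>\<^sup>+x. ennreal (F (step \<rho>m \<rho>p N s x)) \<partial>step_meas \<alpha> N)
    \<le> (\<integral>\<^sup>+\<tau>. ennreal (step_mean \<rho>m \<rho>p N F s \<tau>)
        \<partial>density lborel (\<lambda>x. ennreal (exponential_density (total_rate \<alpha> N) x)))"
proof -
  let ?U = "uniform_measure lborel {0..1::real}"
  let ?P = "measure_pmf (pmf_of_set {0..<2*N+2})"
  let ?D = "density lborel (\<lambda>x. ennreal (exponential_density (total_rate \<alpha> N) x))"
  let ?p = "acceptance_prob \<rho>m \<rho>p N s"
  let ?mix = "\<lambda>\<tau> m. F (accepted \<rho>m \<rho>p N s \<tau> m) * ?p \<tau> m + F (rejected \<rho>m \<rho>p N s \<tau> m) * (1 - ?p \<tau> m)"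
  have U: "prob_space ?U" by (rule prob_space_uniform_measure) auto
  have mix_nonneg: "0 \<le> ?mix \<tau> m" for \<tau> m
    using F acceptance_prob_bounds by (intro add_nonneg_nonneg mult_nonneg_nonneg) auto
  have "(\<integral>\<^sup>+x. ennreal (F (step \<rho>m \<rho>p N s x)) \<partial>step_meas \<alpha> N)
      \<le> (\<integral>\<^sup>+\<tau>. \<integral>\<^sup>+z. ennreal (F (step \<rho>m \<rho>p N s (\<tau>, z))) \<partial>(?P \<Otimes>\<^sub>M ?U) \<partial>?D)"
    unfolding step_meas_def
    by (intro nn_integral_pair_le prob_space_imp_sigma_finite prob_space_pair U prob_space_measure_pmf)
  also have "\<dots> \<le> (\<integral>\<^sup>+\<tau>. \<integral>\<^sup>+m. \<integral>\<^sup>+u. ennreal (F (step \<rho>m \<rho>p N s (\<tau>, m, u))) \<partial>?U \<partial>?P \<partial>?D)"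
    by (intro nn_integral_mono nn_integral_pair_le prob_space_imp_sigma_finite U)
  also have "\<dots> = (\<integral>\<^sup>+\<tau>. ennreal (step_mean \<rho>m \<rho>p N F s \<tau>) \<partial>?D)"
  proof (intro nn_integral_cong)
    fix \<tau>
    have "(\<integral>\<^sup>+m. \<integral>\<^sup>+u. ennreal (F (step \<rho>m \<rho>p N s (\<tau>, m, u))) \<partial>?U \<partial>?P)
        = ennreal (\<Sum>m<2*N+2. ?mix \<tau> m) / ennreal (2 * real N + 2)"
      using mix_nonneg nn_integral_step_acceptance[where F=F, OF F]
      by (subst nn_integral_pmf_of_set) (auto simp: atLeast0LessThan sum_ennreal
          ennreal_of_nat_eq_real_of_nat add.commute simp del: sum.lessThan_Suc)
    also have "\<dots> = ennreal (step_mean \<rho>m \<rho>p N F s \<tau>)"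
      unfolding step_mean_def using mix_nonneg by (intro divide_ennreal sum_nonneg) auto
    finally show "(\<integral>\<^sup>+m. \<integral>\<^sup>+u. ennreal (F (step \<rho>m \<rho>p N s (\<tau>, m, u))) \<partial>?U \<partial>?P)
        = ennreal (step_mean \<rho>m \<rho>p N F s \<tau>)" .
  qed
  finally show ?thesis .
qed

context
  fixes \<rho>m \<rho>p :: "real \<Rightarrow> real" and N :: nat
begin

definition path_weight :: "real \<Rightarrow> real \<Rightarrow> real \<Rightarrow> real \<Rightarrow> nat \<Rightarrow> state \<Rightarrow> mark stream \<Rightarrow> real" where
  "path_weight \<theta> B R T K s \<omega> =
     (\<Sum>k<K. current_weight N \<theta> B (run \<rho>m \<rho>p N s \<omega> k)) + time_weight R T (run \<rho>m \<rho>p N s \<omega> K)"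

definition path_weight_bound :: "real \<Rightarrow> real \<Rightarrow> real \<Rightarrow> real \<Rightarrow> nat \<Rightarrow> state \<Rightarrow> real" where
  "path_weight_bound \<theta> B R T K s =
     (\<Sum>j<K. growth_factor N \<theta> ^ j) * current_weight N \<theta> B s + (1/2)^K * time_weight R T s"

lemma path_weight_nonneg: "0 \<le> path_weight \<theta> B R T K s \<omega>"
  unfolding path_weight_def
  by (intro add_nonneg_nonneg sum_nonneg current_weight_nonneg time_weight_nonneg)

lemma path_weight_bound_nonneg: "0 \<le> path_weight_bound \<theta> B R T K s"
  unfolding path_weight_bound_def growth_factor_def
  by (intro add_nonneg_nonneg mult_nonneg_nonneg sum_nonneg current_weight_nonneg time_weight_nonneg) auto

lemma path_weight_Suc:
  "path_weight \<theta> B R T (Suc K) s \<omega> =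
     current_weight N \<theta> B s + path_weight \<theta> B R T K (step \<rho>m \<rho>p N s (shd \<omega>)) (stl \<omega>)"
  unfolding path_weight_def sum.lessThan_Suc_shift run_Suc_shift by simp

lemma path_weight_bound_Suc:
  "path_weight_bound \<theta> B R T (Suc K) s = current_weight N \<theta> B s
     + (growth_factor N \<theta> * (\<Sum>j<K. growth_factor N \<theta> ^ j) * current_weight N \<theta> B s
        + (1/2)^K * time_weight R T s / 2)"
proof -
  have "(\<Sum>j<Suc K. growth_factor N \<theta> ^ j) = 1 + growth_factor N \<theta> * (\<Sum>j<K. growth_factor N \<theta> ^ j)"
    by (simp add: sum.lessThan_Suc_shift sum_distrib_left del: sum.lessThan_Suc)
  then show ?thesis by (simp add: path_weight_bound_def algebra_simps)
qed

lemma nn_integral_path_weight_bound_step_le: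
  assumes R: "total_rate \<alpha> N > 0" and \<theta>: "0 \<le> \<theta>" "\<theta> \<le> 1"
  defines "R \<equiv> total_rate \<alpha> N"
  shows "(\<integral>\<^sup>+x. ennreal (path_weight_bound \<theta> B R T K (step \<rho>m \<rho>p N s x)) \<partial>step_meas \<alpha> N)
    \<le> ennreal (growth_factor N \<theta> * (\<Sum>j<K. growth_factor N \<theta> ^ j) * current_weight N \<theta> B s
        + (1/2)^K * time_weight R T s / 2)"
proof -
  let ?D = "density lborel (\<lambda>x. ennreal (exponential_density R x))"
  let ?C = "\<Sum>j<K. growth_factor N \<theta> ^ j"
  have C: "0 \<le> ?C" by (simp add: growth_factor_def sum_nonneg)
  have "(\<integral>\<^sup>+x. ennreal (path_weight_bound \<theta> B R T K (step \<rho>m \<rho>p N s x)) \<partial>step_meas \<alpha> N)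
      \<le> (\<integral>\<^sup>+\<tau>. ennreal (step_mean \<rho>m \<rho>p N (path_weight_bound \<theta> B R T K) s \<tau>) \<partial>?D)"
    unfolding R_def by (intro nn_integral_step_le R path_weight_bound_nonneg)
  also have "\<dots> \<le> (\<integral>\<^sup>+\<tau>. ennreal (growth_factor N \<theta> * ?C * current_weight N \<theta> B s
        + (1/2)^K * time_weight R T s * exp (- R * \<tau>)) \<partial>?D)"
  proof (intro nn_integral_mono ennreal_leI)
    fix \<tau>
    have "step_mean \<rho>m \<rho>p N (path_weight_bound \<theta> B R T K) s \<tau>
        = ?C * step_mean \<rho>m \<rho>p N (current_weight N \<theta> B) s \<tau>
          + (1/2)^K * step_mean \<rho>m \<rho>p N (time_weight R T) s \<tau>"
      unfolding path_weight_bound_def[abs_def] by (rule step_mean_linear)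
    also have "\<dots> \<le> ?C * (growth_factor N \<theta> * current_weight N \<theta> B s)
          + (1/2)^K * (exp (- R * \<tau>) * time_weight R T s)"
      using C step_mean_current_weight_le[OF \<theta>] step_mean_time_weight
      by (intro add_mono mult_left_mono) auto
    finally show "step_mean \<rho>m \<rho>p N (path_weight_bound \<theta> B R T K) s \<tau>
        \<le> growth_factor N \<theta> * ?C * current_weight N \<theta> B s + (1/2)^K * time_weight R T s * exp (- R * \<tau>)"
      by (simp add: algebra_simps)
  qed
  also have "\<dots> = ennreal (growth_factor N \<theta> * ?C * current_weight N \<theta> B s + (1/2)^K * time_weight R T s / 2)"
    using R C unfolding R_def
    by (intro nn_integral_exponential_affine mult_nonneg_nonneg current_weight_nonneg time_weight_nonneg)
      (auto simp: growth_factor_def)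
  finally show ?thesis .
qed

lemma nn_integral_path_weight_le:
  assumes R: "total_rate \<alpha> N > 0" and \<theta>: "0 \<le> \<theta>" "\<theta> \<le> 1"
  defines "R \<equiv> total_rate \<alpha> N"
  shows "(\<integral>\<^sup>+\<omega>. ennreal (path_weight \<theta> B R T K s \<omega>) \<partial>stream_space (step_meas \<alpha> N))
    \<le> ennreal (path_weight_bound \<theta> B R T K s)"
proof (induction K arbitrary: s)
  interpret M: prob_space "step_meas \<alpha> N" using prob_space_step_meas[OF R] .
  interpret S: prob_space "stream_space (step_meas \<alpha> N)" by (rule M.prob_space_stream_space)
  case 0
  show ?case by (simp add: path_weight_def path_weight_bound_def S.emeasure_space_1)
  case (Suc K)
  let ?C = "\<Sum>j<K. growth_factor N \<theta> ^ j"
  have "(\<integral>\<^sup>+\<omega>. ennreal (path_weight \<theta> B R T (Suc K) s \<omega>) \<partial>stream_space (step_meas \<alpha> N))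
      = (\<integral>\<^sup>+\<omega>. ennreal (current_weight N \<theta> B s)
          + ennreal (path_weight \<theta> B R T K (step \<rho>m \<rho>p N s (shd \<omega>)) (stl \<omega>)) \<partial>stream_space (step_meas \<alpha> N))"
    by (simp add: path_weight_Suc ennreal_plus path_weight_nonneg current_weight_nonneg)
  also have "\<dots> \<le> ennreal (current_weight N \<theta> B s)
      + (\<integral>\<^sup>+x. \<integral>\<^sup>+\<omega>. ennreal (path_weight \<theta> B R T K (step \<rho>m \<rho>p N s x) \<omega>)
          \<partial>stream_space (step_meas \<alpha> N) \<partial>step_meas \<alpha> N)"
    using order_trans[OF S.nn_integral_add_const_le add_left_mono[OF M.nn_integral_stream_space_le],
        of _ "\<lambda>\<omega>. ennreal (path_weight \<theta> B R T K (step \<rho>m \<rho>p N s (shd \<omega>)) (stl \<omega>))"]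
    by simp
  also have "\<dots> \<le> ennreal (current_weight N \<theta> B s)
      + ennreal (growth_factor N \<theta> * ?C * current_weight N \<theta> B s + (1/2)^K * time_weight R T s / 2)"
    using Suc.IH unfolding R_def
    by (intro add_left_mono order_trans[OF nn_integral_mono nn_integral_path_weight_bound_step_le] R \<theta>)
  also have "\<dots> = ennreal (path_weight_bound \<theta> B R T (Suc K) s)"
    unfolding path_weight_bound_Suc
    by (simp add: ennreal_plus current_weight_nonneg time_weight_nonneg growth_factor_def sum_nonneg)
  finally show ?case .
qed

end

section \<open>The exceedance probability\<close>

context
  fixes \<rho>m \<rho>p :: "real \<Rightarrow> real" and N :: nat
begin

text \<open>Either K events occur before T, or the event interval containing t is one
  of the first K; in that state mass balance makes the total current equal to
  (2N+2) h(t,x) up to (2N+2)(2N+1).\<close>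

lemma exceedance_imp_one_le_path_weight:
  assumes "0 < R" "0 \<le> \<theta>" "0 \<le> t" "t \<le> T" "- int N - 1 \<le> x" "x \<le> int N"
    and B: "B \<le> (2 * real N + 2) * (\<bar>real_of_int (current \<rho>m \<rho>p N \<eta> \<omega> t x)\<bar> - (2 * real N + 1))"
  shows "1 \<le> path_weight \<rho>m \<rho>p N \<theta> B R T K (0, \<eta>, \<lambda>_. 0) \<omega>"
proof -
  let ?run = "run \<rho>m \<rho>p N (0, \<eta>, \<lambda>_. 0) \<omega>"
  have current_weights_nonneg: "0 \<le> (\<Sum>k<K. current_weight N \<theta> B (?run k))"
    by (intro sum_nonneg current_weight_nonneg)
  show ?thesis
  proof (cases "fst (?run K) \<le> T")
    case True
    then have "1 \<le> time_weight R T (?run K)"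
      using assms(1) by (simp add: time_weight_def)
    then show ?thesis using current_weights_nonneg unfolding path_weight_def by linarith
  next
    case False
    define j where "j = (LEAST k. t < fst (?run (Suc k)))"
    obtain K' where K': "K = Suc K'" using False assms(3,4) by (cases K) auto
    have "j \<le> K'" unfolding j_def using False assms(4) K' by (intro Least_le) simp
    then have "j < K" using K' by simp
    obtain \<eta>' h where run_j: "snd (?run j) = (\<eta>', h)"
      by (cases "snd (?run j)")
    have "current \<rho>m \<rho>p N \<eta> \<omega> t x = h x"
      using run_j by (simp add: current_def evolve_eq_run j_def)
    moreover have "mass_balance N \<eta> (snd (?run j))"
      by (rule mass_balance_run) (simp add: mass_balance_def)
    ultimately have "B \<le> \<bar>real_of_int (total_current N h)\<bar>"
      using B total_current_lower_bound[of N \<eta> \<eta>' h x] run_j assms(5,6) by simp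
    then have "1 \<le> current_weight N \<theta> B (?run j)"
      using run_j assms(2) by (simp add: current_weight_def one_le_twosided_exp)
    also have "\<dots> \<le> path_weight \<rho>m \<rho>p N \<theta> B R T K (0, \<eta>, \<lambda>_. 0) \<omega>"
      unfolding path_weight_def using \<open>j < K\<close>
      by (intro add_increasing2 member_le_sum current_weight_nonneg time_weight_nonneg) auto
    finally show ?thesis .
  qed
qed

end

lemma total_rate_pos: "1 \<le> N \<Longrightarrow> 0 < total_rate \<alpha> N"
  unfolding total_rate_def by (intro mult_pos_pos) auto

lemma floor_scaled_bounds:
  assumes "-1 \<le> y" "y \<le> 1"
  shows "- int N - 1 \<le> \<lfloor>real N * y\<rfloor>" "\<lfloor>real N * y\<rfloor> \<le> int N"
proof -
  have "- real N \<le> real N * y" "real N * y \<le> real N"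
    using mult_left_mono[OF assms(1), of "real N"] mult_left_mono[OF assms(2), of "real N"] by simp_all
  then show "- int N - 1 \<le> \<lfloor>real N * y\<rfloor>" "\<lfloor>real N * y\<rfloor> \<le> int N" by linarith+
qed

lemma height_prob_le_path_weight_bound:
  fixes \<alpha> L :: real
  assumes N: "1 \<le> N" and y0: "-1 \<le> y0" "y0 \<le> 1" and \<theta>: "0 \<le> \<theta>" "\<theta> \<le> 1"
  defines "B \<equiv> (2 * real N + 2) * (L * real N powr (1 + \<alpha>) - (2 * real N + 1))"
  shows "height_prob \<alpha> T \<rho>m \<rho>p y0 N \<eta> L
    \<le> path_weight_bound N \<theta> B (total_rate \<alpha> N) T K (0, \<eta>, \<lambda>_. 0)"
proof -
  let ?M = "stream_space (step_meas \<alpha> N)"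
  let ?W = "path_weight \<rho>m \<rho>p N \<theta> B (total_rate \<alpha> N) T K (0, \<eta>, \<lambda>_. 0)"
  define Bad where "Bad = {\<omega> \<in> space ?M. \<exists>t\<in>{0..T}.
      \<bar>real_of_int (current \<rho>m \<rho>p N \<eta> \<omega> t \<lfloor>real N * y0\<rfloor>)\<bar> / real N powr (1 + \<alpha>) \<ge> L}"
  have indicator_le: "indicator Bad \<omega> \<le> ennreal (?W \<omega>)" for \<omega>
  proof (cases "\<omega> \<in> Bad")
    case True
    then obtain t where t: "0 \<le> t" "t \<le> T"
      and "L * real N powr (1 + \<alpha>) \<le> \<bar>real_of_int (current \<rho>m \<rho>p N \<eta> \<omega> t \<lfloor>real N * y0\<rfloor>)\<bar>"
      using N unfolding Bad_def by (auto simp: pos_le_divide_eq)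
    then have "B \<le> (2 * real N + 2)
        * (\<bar>real_of_int (current \<rho>m \<rho>p N \<eta> \<omega> t \<lfloor>real N * y0\<rfloor>)\<bar> - (2 * real N + 1))"
      unfolding B_def by (intro mult_left_mono) simp_all
    then have "1 \<le> ?W \<omega>"
      using total_rate_pos[OF N] \<theta> t floor_scaled_bounds[OF y0]
      by (intro exceedance_imp_one_le_path_weight) auto
    then show ?thesis using True by simp
  qed (simp add: path_weight_nonneg)
  have "emeasure ?M Bad \<le> ennreal (path_weight_bound N \<theta> B (total_rate \<alpha> N) T K (0, \<eta>, \<lambda>_. 0))"
    using emeasure_le_nn_integral_dominating[OF indicator_le]
      nn_integral_path_weight_le[OF total_rate_pos[OF N] \<theta>]
    by (rule order_trans)
  then show ?thesis
    unfolding height_prob_def Bad_def[symmetric] measure_def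
    by (intro enn2real_leI path_weight_bound_nonneg)
qed

section \<open>Asymptotics\<close>

text \<open>The two terms of the path weight bound for \<theta> = 1/n, total rate R = n P (2n+2)
  and K \<approx> 4RT events, where P stands for n^(1+\<alpha>).\<close>

lemma time_term_le:
  fixes n P T Q :: real
  assumes "1 \<le> n" "1 \<le> P" "\<bar>Q\<bar> + 1 \<le> n * T" "4 * (n * P * (2 * n + 2) * T) \<le> real K"
  shows "(1/2)^K * exp (n * P * (2 * n + 2) * T) \<le> exp (P * Q) / 2"
proof -
  have "0 < n * T" using assms(3) abs_ge_zero[of Q] by linarith
  then have T: "0 < T" using assms(1) by (simp add: zero_less_mult_iff)
  have "P * (\<bar>Q\<bar> + 1) \<le> P * (n * T)" using assms by (intro mult_left_mono) auto
  also have "\<dots> \<le> n * P * (2 * n + 2) * T"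
    using assms T by (simp add: mult_right_mono mult_left_mono algebra_simps)
  finally have "- (n * P * (2 * n + 2) * T) \<le> P * Q - ln 2"
    using ln_le_minus_one[of 2] assms(2) abs_ge_minus_self[of Q] mult_left_mono[of "-Q" "\<bar>Q\<bar>" P]
    by (simp add: algebra_simps)
  then have "exp (- (n * P * (2 * n + 2) * T)) \<le> exp (P * Q - ln 2)" by simp
  also have "\<dots> = exp (P * Q) / 2" by (simp add: exp_diff)
  finally show ?thesis using half_power_mult_exp_le[OF assms(4)] by linarith
qed

lemma events_mult_log_growth_le:
  fixes n P T :: real
  assumes n: "1 \<le> n" and "0 \<le> P" "0 \<le> T" and K: "real K \<le> 4 * (n * P * (2 * n + 2) * T) + 1"
  shows "real K * (1/n / (2 * n + 2) + (1/n)\<^sup>2) \<le> 20 * (P * T) + 2"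
proof -
  have PT: "0 \<le> P * T" using assms by simp
  have "real K \<le> (4 * (P * T) + 1) * (n * (2 * n + 2))"
  proof -
    have "1 \<le> n * (2 * n + 2)" using mult_mono[of 1 n 1 "2 * n + 2"] n by simp
    then show ?thesis using K by (simp add: algebra_simps)
  qed
  moreover have "0 < n * (2 * n + 2)" using n by simp
  ultimately have bulk: "real K * (1/n / (2 * n + 2)) \<le> 4 * (P * T) + 1"
    by (simp add: pos_divide_le_eq)
  have "real K \<le> (16 * (P * T) + 1) * n\<^sup>2"
  proof -
    have "n * P * (2 * n + 2) * T = n * (P * T) * (2 * n + 2)" by (simp add: algebra_simps)
    also have "\<dots> \<le> n * (P * T) * (4 * n)" using n PT by (intro mult_left_mono) auto
    also have "\<dots> = 4 * (P * T) * n\<^sup>2" by (simp add: power2_eq_square algebra_simps)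
    finally have "n * P * (2 * n + 2) * T \<le> 4 * (P * T) * n\<^sup>2" .
    moreover have "1 \<le> n\<^sup>2" using n by (simp add: one_le_power)
    ultimately show ?thesis using K by (simp add: algebra_simps)
  qed
  then have "real K * (1/n)\<^sup>2 \<le> 16 * (P * T) + 1"
    using n by (simp add: pos_divide_le_eq power_one_over)
  with bulk show ?thesis by (simp add: distrib_left)
qed

lemma ln_events_le:
  fixes n P T :: real
  assumes n: "1 \<le> n" and P: "1 \<le> P" and T: "0 \<le> T" and "1 \<le> K"
    and K: "real K \<le> 4 * (n * P * (2 * n + 2) * T) + 1"
  shows "ln (2 * real K) \<le> ln (32 * T + 2) + 2 * n + P"
proof -
  have "n * P * (2 * n + 2) * T = n * (P * T) * (2 * n + 2)" by (simp add: algebra_simps)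
  also have "\<dots> \<le> n * (P * T) * (4 * n)" using n P T by (intro mult_left_mono) auto
  also have "\<dots> = 4 * T * (n\<^sup>2 * P)" by (simp add: power2_eq_square algebra_simps)
  finally have "n * P * (2 * n + 2) * T \<le> 4 * T * (n\<^sup>2 * P)" .
  moreover have "1 \<le> n\<^sup>2 * P" using mult_mono[of 1 "n\<^sup>2" 1 P] one_le_power[of n 2] n P by simp
  ultimately have "2 * real K \<le> (32 * T + 2) * (n\<^sup>2 * P)" using K by (simp add: algebra_simps)
  then have "ln (2 * real K) \<le> ln ((32 * T + 2) * (n\<^sup>2 * P))"
    using assms by simp
  also have "\<dots> = ln (32 * T + 2) + 2 * ln n + ln P"
    using n P T by (simp add: ln_mult ln_realpow)
  also have "\<dots> \<le> ln (32 * T + 2) + 2 * n + P"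
    using ln_le_minus_one[of n] ln_le_minus_one[of P] n P by simp
  finally show ?thesis .
qed

lemma scaled_threshold_ge:
  fixes n L P :: real
  assumes n: "1 \<le> n" and "0 \<le> L" "0 \<le> P"
  shows "2 * (L * P) - 12 * n \<le> 1/n * ((2 * n + 2) * (L * P - (2 * n + 1)))"
proof -
  have "2 * (L * P) \<le> (2 * n + 2) / n * (L * P)"
    using assms by (intro mult_right_mono) (auto simp: pos_le_divide_eq)
  moreover have "(2 * n + 2) * (2 * n + 1) / n \<le> 12 * n"
    using mult_mono[of "2 * n + 2" "4 * n" "2 * n + 1" "3 * n"] n
    by (simp add: pos_divide_le_eq algebra_simps)
  ultimately show ?thesis using n by (simp add: field_simps)
qed

lemma sum_power_mult_exp_le:
  fixes c D :: real
  assumes "1 \<le> c" "0 < K"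
  shows "(\<Sum>j<K. c ^ j) * (2 * exp (- D)) \<le> exp (ln (2 * real K) + real K * ln c - D)"
proof -
  have "(\<Sum>j<K. c ^ j) * (2 * exp (- D)) \<le> real K * c ^ K * (2 * exp (- D))"
    using sum_power_le[OF assms(1)] by (intro mult_right_mono) auto
  also have "\<dots> = exp (ln (2 * real K)) * exp (real K * ln c) * exp (- D)"
    using assms by (simp add: exp_of_nat_mult)
  also have "\<dots> = exp (ln (2 * real K) + real K * ln c - D)"
    by (simp add: exp_add exp_diff exp_minus field_simps)
  finally show ?thesis .
qed

lemma current_term_le:
  fixes n P T L :: real
  assumes n: "1 \<le> n" and T: "0 < T" and L: "0 \<le> L" and P: "(ln (32 * T + 2) + 18) * n \<le> P"
    and K: "real K \<le> 4 * (n * P * (2 * n + 2) * T) + 1"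
  shows "(\<Sum>j<K. exp (1/n / (2 * n + 2) + (1/n)\<^sup>2) ^ j)
      * (2 * exp (- (1/n * ((2 * n + 2) * (L * P - (2 * n + 1))))))
    \<le> exp (P * (20 * T + 2 - 2 * L)) / 2"
proof (cases "K = 0")
  case False
  define c where "c = exp (1/n / (2 * n + 2) + (1/n)\<^sup>2)"
  define D where "D = 1/n * ((2 * n + 2) * (L * P - (2 * n + 1)))"
  have "1 \<le> c" unfolding c_def using n by simp
  have lnT: "0 \<le> ln (32 * T + 2)" using T by simp
  have P_ge: "ln (32 * T + 2) + 18 * n \<le> P"
    using P mult_left_mono[OF n lnT] by (simp add: algebra_simps)
  have P1: "1 \<le> P" using P_ge lnT n by linarith
  have "2 * (L * P) - 12 * n \<le> D"
    unfolding D_def using n L P1 by (intro scaled_threshold_ge) auto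
  moreover have "real K * ln c \<le> 20 * (P * T) + 2"
    unfolding c_def using events_mult_log_growth_le[OF n _ _ K] P1 T by simp
  moreover have "ln (2 * real K) \<le> ln (32 * T + 2) + 2 * n + P"
    using ln_events_le[OF n P1 _ _ K] T False by simp
  moreover have "P * (20 * T + 2 - 2 * L) = 20 * (P * T) + 2 * P - 2 * (L * P)"
    by (simp add: algebra_simps)
  ultimately have "ln (2 * real K) + real K * ln c - D \<le> P * (20 * T + 2 - 2 * L) - ln 2"
    using P_ge ln_le_minus_one[of 2] n by linarith
  then have "exp (ln (2 * real K) + real K * ln c - D) \<le> exp (P * (20 * T + 2 - 2 * L) - ln 2)"
    by simp
  also have "\<dots> = exp (P * (20 * T + 2 - 2 * L)) / 2" by (simp add: exp_diff)
  finally have exponent: "exp (ln (2 * real K) + real K * ln c - D) \<le> exp (P * (20 * T + 2 - 2 * L)) / 2" .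
  have "(\<Sum>j<K. c ^ j) * (2 * exp (- D)) \<le> exp (ln (2 * real K) + real K * ln c - D)"
    using \<open>1 \<le> c\<close> False by (intro sum_power_mult_exp_le) auto
  then show ?thesis using exponent unfolding c_def D_def by linarith
qed simp

lemma path_weight_bound_initial:
  "path_weight_bound N \<theta> B R T K (0, \<eta>, \<lambda>_. 0)
    = (\<Sum>j<K. growth_factor N \<theta> ^ j) * (2 * exp (- (\<theta> * B))) + (1/2)^K * exp (R * T)"
  by (simp add: path_weight_bound_def current_weight_def twosided_exp_def total_current_def time_weight_def)

lemma height_prob_le_exp:
  fixes \<alpha> T L y0 :: real
  assumes T: "0 < T" and L: "0 \<le> L" and y0: "-1 \<le> y0" "y0 \<le> 1" and N: "1 \<le> N"
    and large: "\<bar>20 * T + 2 - 2 * L\<bar> + 1 \<le> real N * T" "ln (32 * T + 2) + 18 \<le> real N powr \<alpha>"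
  shows "height_prob \<alpha> T \<rho>m \<rho>p y0 N \<eta> L \<le> exp (real N powr (1 + \<alpha>) * (20 * T + 2 - 2 * L))"
proof -
  define n where "n = real N"
  define P where "P = real N powr (1 + \<alpha>)"
  define K where "K = nat \<lceil>4 * (n * P * (2 * n + 2) * T)\<rceil>"
  have n: "1 \<le> n" using N by (simp add: n_def)
  have P_eq: "P = n * n powr \<alpha>" using n by (simp add: P_def n_def powr_add)
  have "n powr (2 + \<alpha>) = n powr 1 * n powr (1 + \<alpha>)"
    unfolding powr_add[symmetric] by simp
  then have rate: "total_rate \<alpha> N = n * P * (2 * n + 2)"
    using n by (simp add: total_rate_def P_def n_def)
  have P_large: "(ln (32 * T + 2) + 18) * n \<le> P"
    using large(2) n unfolding P_eq n_def by (simp add: mult.commute mult_right_mono)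
  have "(ln (32 * T + 2) + 18) * 1 \<le> (ln (32 * T + 2) + 18) * n"
    using T n by (intro mult_left_mono) auto
  moreover have "0 \<le> ln (32 * T + 2)" using T by simp
  ultimately have P1: "1 \<le> P" using P_large by (simp only: mult_1_right)
  have "real K = real_of_int \<lceil>4 * (n * P * (2 * n + 2) * T)\<rceil>"
    using n P1 T unfolding K_def by simp
  then have K: "4 * (n * P * (2 * n + 2) * T) \<le> real K" "real K \<le> 4 * (n * P * (2 * n + 2) * T) + 1"
    by linarith+
  have "height_prob \<alpha> T \<rho>m \<rho>p y0 N \<eta> L
      \<le> path_weight_bound N (1/n) ((2 * n + 2) * (L * P - (2 * n + 1))) (total_rate \<alpha> N) T K (0, \<eta>, \<lambda>_. 0)"
    unfolding n_def P_def using N y0 by (intro height_prob_le_path_weight_bound) auto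
  also have "\<dots> \<le> exp (P * (20 * T + 2 - 2 * L)) / 2 + exp (P * (20 * T + 2 - 2 * L)) / 2"
    unfolding path_weight_bound_initial rate growth_factor_def n_def[symmetric]
    using large(1) unfolding n_def[symmetric]
    by (intro add_mono current_term_le[OF n T L P_large K(2)] time_term_le[OF n P1 _ K(1)])
  finally show ?thesis by (simp add: P_def)
qed

lemma scaled_ln_ereal_le:
  assumes "0 < P" "p \<le> exp (P * Q)"
  shows "ereal (1 / P) * ln_ereal p \<le> ereal Q"
proof (cases "0 < p")
  case True
  then have "ln p \<le> P * Q" using assms(2) by (metis ln_exp ln_le_cancel_iff exp_gt_zero)
  then show ?thesis using True assms(1) by (simp add: ln_ereal_def pos_divide_le_eq mult.commute)
qed (use assms(1) in \<open>simp add: ln_ereal_def\<close>)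

lemma limsup_height_prob_le:
  fixes \<alpha> T y0 L :: real and \<eta> :: "nat \<Rightarrow> config"
  assumes \<alpha>: "0 < \<alpha>" and T: "0 < T" and y0: "-1 \<le> y0" "y0 \<le> 1" and L: "0 \<le> L"
  shows "limsup (\<lambda>N. ereal (1 / real N powr (1 + \<alpha>)) * ln_ereal (height_prob \<alpha> T \<rho>m \<rho>p y0 N (\<eta> N) L))
     \<le> ereal (20 * T + 2 - 2 * L)"
proof (rule Limsup_bounded)
  have "\<forall>\<^sub>F N in sequentially. c \<le> real N" for c
    using filterlim_real_sequentially by (simp add: filterlim_at_top)
  then have "\<forall>\<^sub>F N in sequentially. 1 \<le> real N \<and> (\<bar>20 * T + 2 - 2 * L\<bar> + 1) / T \<le> real N
      \<and> (ln (32 * T + 2) + 18) powr (1 / \<alpha>) \<le> real N"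
    by (intro eventually_conj)
  then show "\<forall>\<^sub>F N in sequentially.
      ereal (1 / real N powr (1 + \<alpha>)) * ln_ereal (height_prob \<alpha> T \<rho>m \<rho>p y0 N (\<eta> N) L)
        \<le> ereal (20 * T + 2 - 2 * L)"
  proof eventually_elim
    case (elim N)
    have "ln (32 * T + 2) + 18 = ((ln (32 * T + 2) + 18) powr (1 / \<alpha>)) powr \<alpha>"
      using T \<alpha> by (simp add: powr_powr add_pos_nonneg)
    also have "\<dots> \<le> real N powr \<alpha>" using elim \<alpha> T by (intro powr_mono2) auto
    finally have "ln (32 * T + 2) + 18 \<le> real N powr \<alpha>" .
    then show ?case
      using elim T L y0 by (intro scaled_ln_ereal_le height_prob_le_exp) (auto simp: pos_divide_le_eq)
  qed
qed

theorem proposition9p1: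
  fixes \<alpha> T a y0 :: real and \<rho>m \<rho>p :: "real \<Rightarrow> real" and \<eta> :: "nat \<Rightarrow> config"
  assumes "\<alpha> > 0" and "T > 0" and "0 < a" and "a < 1/2"
    and "\<rho>m C1_differentiable_on {0..T}" and "\<rho>p C1_differentiable_on {0..T}"
    and "\<forall>t\<in>{0..T}. a \<le> \<rho>m t \<and> \<rho>m t \<le> 1 - a"
    and "\<forall>t\<in>{0..T}. a \<le> \<rho>p t \<and> \<rho>p t \<le> 1 - a"
    and "-1 \<le> y0" and "y0 \<le> 1"
  shows "((\<lambda>L. limsup (\<lambda>N. ereal (1 / real N powr (1 + \<alpha>))
                   * ln_ereal (height_prob \<alpha> T \<rho>m \<rho>p y0 N (\<eta> N) L)))
          \<longlongrightarrow> -\<infinity>) at_top"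
  unfolding tendsto_MInfty
proof
  fix r :: real
  have "\<forall>\<^sub>F L in at_top. max 0 ((20 * T + 3 - r) / 2) \<le> L" by (rule eventually_ge_at_top)
  then show "\<forall>\<^sub>F L in at_top. limsup (\<lambda>N. ereal (1 / real N powr (1 + \<alpha>))
      * ln_ereal (height_prob \<alpha> T \<rho>m \<rho>p y0 N (\<eta> N) L)) < ereal r"
  proof eventually_elim
    case (elim L)
    then have "limsup (\<lambda>N. ereal (1 / real N powr (1 + \<alpha>))
        * ln_ereal (height_prob \<alpha> T \<rho>m \<rho>p y0 N (\<eta> N) L)) \<le> ereal (20 * T + 2 - 2 * L)"
      using assms by (intro limsup_height_prob_le) auto
    also have "\<dots> < ereal r" using elim by simp
    finally show ?case .
  qed
qed

end
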